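(* Let $f\colon\mathcal P_0\to\mathcal P_1$ and $g\colon\mathcal P_1\to\mathcal P_2$ be morphisms of models for manifolds with corners. Then for every object $p$ of $\mathcal P_0$ there is a natural bijection $$Q_{g\circ f}(p)\;\cong\;Q_f(p)\,\amalg\,Q_g(f(p)).$$
   Context: A category $\mathcal P$ equipped with a functor $\operatorname{codim}\colon \mathcal P\to\mathbb N$ is a \emph{model for manifolds with corners} if for every object $p$ the overcategory $\mathcal P^p$ (arrows with target $p$) is isomorphic to the power set of $\{1,\dots,\operatorname{codim} p\}$ ordered by inclusion. Write $Q_{\mathcal P}(p)$ for the set of minimal elements of $\mathcal P^p$ other than its initial object. A \emph{morphism of models} $f\colon\mathcal P_0\to\mathcal P_1$ is a functor which is an embedding (injective on objects and arrows), preserves codimension up to an overall constant shift, and, for every arrow $\alpha$ of $\mathcal P_0$, induces a bijection between factorisations of $\alpha$ in $\mathcal P_0$ and factorisations of $f(\alpha)$ in $\mathcal P_1$. For an object $p$ of $\mathcal P_0$, let $p_0$ be the unique minimal element of $\mathcal P_0$ admitting an arrow to $p$ (the source of the initial object of $\mathcal P_0^p$), and define $Q_f(p)=Q_{\mathcal P_1}(f(p_0))$. *)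

theory Defs
  imports Main
begin

record ('o, 'a) cat =
  Obj  :: "'o set"
  Arr  :: "'a set"
  Dom  :: "'a \<Rightarrow> 'o"
  Cod  :: "'a \<Rightarrow> 'o"
  Id   :: "'o \<Rightarrow> 'a"
  Comp :: "'a \<Rightarrow> 'a \<Rightarrow> 'a"   (* Comp C g f = g \<circ> f, defined when Cod f = Dom g *)

definition category :: "('o, 'a) cat \<Rightarrow> bool" where
  "category C \<longleftrightarrow>
     (\<forall>f\<in>Arr C. Dom C f \<in> Obj C \<and> Cod C f \<in> Obj C) \<and>
     (\<forall>x\<in>Obj C. Id C x \<in> Arr C \<and> Dom C (Id C x) = x \<and> Cod C (Id C x) = x) \<and>
     (\<forall>f\<in>Arr C. \<forall>g\<in>Arr C. Cod C f = Dom C g \<longrightarrow>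
        Comp C g f \<in> Arr C \<and> Dom C (Comp C g f) = Dom C f \<and> Cod C (Comp C g f) = Cod C g) \<and>
     (\<forall>f\<in>Arr C. Comp C (Id C (Cod C f)) f = f \<and> Comp C f (Id C (Dom C f)) = f) \<and>
     (\<forall>f\<in>Arr C. \<forall>g\<in>Arr C. \<forall>h\<in>Arr C. Cod C f = Dom C g \<longrightarrow> Cod C g = Dom C h \<longrightarrow>
        Comp C h (Comp C g f) = Comp C (Comp C h g) f)"

definition over :: "('o, 'a) cat \<Rightarrow> 'o \<Rightarrow> 'a set" where
  "over C p = {a \<in> Arr C. Cod C a = p}"

definition over_hom :: "('o, 'a) cat \<Rightarrow> 'a \<Rightarrow> 'a \<Rightarrow> 'a set" where
  "over_hom C a b = {c \<in> Arr C. Dom C c = Dom C a \<and> Cod C c = Dom C b \<and> Comp C b c = a}"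

definition le_over :: "('o, 'a) cat \<Rightarrow> 'a \<Rightarrow> 'a \<Rightarrow> bool" where
  "le_over C a b \<longleftrightarrow> over_hom C a b \<noteq> {}"

text \<open>Model for manifolds with corners: for each object p, the overcategory C^p is
  isomorphic (as a category) to the poset Pow {1..codim p} under inclusion, i.e. there is a
  bijection on objects, hom sets have exactly one element when the images are included and
  are empty otherwise. codim is a functor to (nat, \<le>); this is in fact forced by the
  isomorphism condition.\<close>

definition model :: "('o, 'a) cat \<Rightarrow> ('o \<Rightarrow> nat) \<Rightarrow> bool" where
  "model C codim \<longleftrightarrow> category C \<and>
     (\<forall>f\<in>Arr C. codim (Dom C f) \<le> codim (Cod C f)) \<and>
     (\<forall>p\<in>Obj C. \<exists>\<phi>. bij_betw \<phi> (over C p) (Pow {1..codim p}) \<and>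
        (\<forall>a\<in>over C p. \<forall>b\<in>over C p.
           (over_hom C a b \<noteq> {} \<longleftrightarrow> \<phi> a \<subseteq> \<phi> b) \<and>
           (\<forall>x\<in>over_hom C a b. \<forall>y\<in>over_hom C a b. x = y)))"

definition is_initial :: "('o, 'a) cat \<Rightarrow> 'o \<Rightarrow> 'a \<Rightarrow> bool" where
  "is_initial C p a \<longleftrightarrow> a \<in> over C p \<and> (\<forall>b\<in>over C p. \<exists>!c. c \<in> over_hom C a b)"

definition init_arr :: "('o, 'a) cat \<Rightarrow> 'o \<Rightarrow> 'a" where
  "init_arr C p = (THE a. is_initial C p a)"

definition base :: "('o, 'a) cat \<Rightarrow> 'o \<Rightarrow> 'o" where
  "base C p = Dom C (init_arr C p)"

definition Q :: "('o, 'a) cat \<Rightarrow> 'o \<Rightarrow> 'a set" where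
  "Q C p = {a \<in> over C p. \<not> is_initial C p a \<and>
             (\<forall>b\<in>over C p. \<not> is_initial C p b \<longrightarrow> le_over C b a \<longrightarrow> b = a)}"

definition factorizations :: "('o, 'a) cat \<Rightarrow> 'a \<Rightarrow> ('a \<times> 'a) set" where
  "factorizations C f = {(g, h). g \<in> Arr C \<and> h \<in> Arr C \<and> Dom C g = Cod C h \<and> Comp C g h = f}"

definition is_functor :: "('o, 'a) cat \<Rightarrow> ('p, 'b) cat \<Rightarrow> ('o \<Rightarrow> 'p) \<Rightarrow> ('a \<Rightarrow> 'b) \<Rightarrow> bool" where
  "is_functor C D F A \<longleftrightarrow>
     F ` Obj C \<subseteq> Obj D \<and> A ` Arr C \<subseteq> Arr D \<and>
     (\<forall>f\<in>Arr C. Dom D (A f) = F (Dom C f) \<and> Cod D (A f) = F (Cod C f)) \<and>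
     (\<forall>x\<in>Obj C. A (Id C x) = Id D (F x)) \<and>
     (\<forall>f\<in>Arr C. \<forall>g\<in>Arr C. Cod C f = Dom C g \<longrightarrow> A (Comp C g f) = Comp D (A g) (A f))"

definition model_morphism ::
  "('o, 'a) cat \<Rightarrow> ('o \<Rightarrow> nat) \<Rightarrow> ('p, 'b) cat \<Rightarrow> ('p \<Rightarrow> nat) \<Rightarrow> ('o \<Rightarrow> 'p) \<Rightarrow> ('a \<Rightarrow> 'b) \<Rightarrow> bool" where
  "model_morphism C c D d F A \<longleftrightarrow>
     model C c \<and> model D d \<and> is_functor C D F A \<and>
     inj_on F (Obj C) \<and> inj_on A (Arr C) \<and>
     (\<exists>k::int. \<forall>p\<in>Obj C. int (d (F p)) = int (c p) + k) \<and>
     (\<forall>f\<in>Arr C. bij_betw (\<lambda>(g, h). (A g, A h)) (factorizations C f) (factorizations D (A f)))"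

text \<open>Q_f(p) = Q_{P_1}(f(p_0)); only the object part of f is needed.\<close>
definition Q_mor :: "('o, 'a) cat \<Rightarrow> ('p, 'b) cat \<Rightarrow> ('o \<Rightarrow> 'p) \<Rightarrow> 'o \<Rightarrow> 'b set" where
  "Q_mor C D F p = Q D (F (base C p))"

end

theory Submission
  imports Defs
begin

text \<open>In a model the overcategory of p is the Boolean lattice of subsets of
  {1..codim p}, and the subset attached to an arrow has as many elements as the codimension of
  its source; so Q(p) consists of the atoms, and there are codim p of them. Let q = f(p0) and let
  j be the initial arrow of q. Composition with g(j) maps Q(g(base q)) to the atoms below g(j).
  Every atom a of the overcategory of q satisfies g(j) \<le> g(a) with a codimension gap of one, so
  exactly one atom lies below g(a) but not below g(j), and it determines a. The two families are
  disjoint, and the constant codimension shift of g makes their total number codim (g q), so they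
  exhaust Q(g q). Finally Q_g(f p) = Q(g(base q)) because the arrow f(p0 \<rightarrow> p) forces
  base (f p) = base q.\<close>

definition over_iso :: "('o, 'a) cat \<Rightarrow> ('o \<Rightarrow> nat) \<Rightarrow> 'o \<Rightarrow> ('a \<Rightarrow> nat set) \<Rightarrow> bool" where
  "over_iso C c p \<phi> \<longleftrightarrow> bij_betw \<phi> (over C p) (Pow {1..c p}) \<and>
     (\<forall>a\<in>over C p. \<forall>b\<in>over C p. le_over C a b \<longleftrightarrow> \<phi> a \<subseteq> \<phi> b)"

lemma model_category: "model C c \<Longrightarrow> category C"
  unfolding model_def by blast

lemma model_obtain_over_iso:
  assumes "model C c" "p \<in> Obj C"
  obtains \<phi> where "over_iso C c p \<phi>"
  using assms unfolding model_def over_iso_def le_over_def by metis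

lemma model_over_hom_unique:
  assumes "model C c" "p \<in> Obj C" "a \<in> over C p" "b \<in> over C p"
    and "x \<in> over_hom C a b" "y \<in> over_hom C a b"
  shows "x = y"
  using assms unfolding model_def by blast

lemma over_iso_le_over_iff:
  "over_iso C c p \<phi> \<Longrightarrow> a \<in> over C p \<Longrightarrow> b \<in> over C p \<Longrightarrow> le_over C a b \<longleftrightarrow> \<phi> a \<subseteq> \<phi> b"
  unfolding over_iso_def by blast

lemma over_iso_subset: "over_iso C c p \<phi> \<Longrightarrow> a \<in> over C p \<Longrightarrow> \<phi> a \<subseteq> {1..c p}"
  unfolding over_iso_def bij_betw_def by auto

lemma over_iso_inj: "over_iso C c p \<phi> \<Longrightarrow> inj_on \<phi> (over C p)"
  unfolding over_iso_def bij_betw_def by auto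

lemma over_iso_obtain_preimage:
  assumes "over_iso C c p \<phi>" "S \<subseteq> {1..c p}"
  obtains a where "a \<in> over C p" "\<phi> a = S"
  using assms unfolding over_iso_def bij_betw_def by (metis Pow_iff imageE)

lemma Comp_in_over:
  assumes "category C" "a \<in> over C p" "e \<in> Arr C" "Cod C e = Dom C a"
  shows "Comp C a e \<in> over C p" "Dom C (Comp C a e) = Dom C e"
  using assms unfolding category_def over_def by auto

lemma model_Dom_in_Obj: "model C c \<Longrightarrow> f \<in> Arr C \<Longrightarrow> Dom C f \<in> Obj C"
  using model_category unfolding category_def by blast

lemma card_over:
  assumes "model C c" "p \<in> Obj C"
  shows "card (over C p) = 2 ^ c p"
proof -
  obtain \<phi> where "over_iso C c p \<phi>" using model_obtain_over_iso[OF assms] .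
  then have "card (over C p) = card (Pow {1..c p})"
    unfolding over_iso_def by (blast intro: bij_betw_same_card)
  then show ?thesis by (simp add: card_Pow)
qed

lemma bij_betw_Comp_over:
  assumes "model C c" "p \<in> Obj C" "e \<in> over C p"
  shows "bij_betw (Comp C e) (over C (Dom C e)) {b \<in> over C p. le_over C b e}"
proof -
  have cat: "category C" using assms(1) by (rule model_category)
  have hom: "x \<in> over_hom C (Comp C e x) e" and mem: "Comp C e x \<in> over C p"
    if "x \<in> over C (Dom C e)" for x
    using that Comp_in_over[OF cat assms(3)] unfolding over_def over_hom_def by auto
  have "inj_on (Comp C e) (over C (Dom C e))"
    by (rule inj_onI) (metis hom mem model_over_hom_unique[OF assms(1,2) _ assms(3)])
  moreover have "Comp C e ` over C (Dom C e) = {b \<in> over C p. le_over C b e}"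
  proof (intro set_eqI iffI)
    fix b assume "b \<in> {b \<in> over C p. le_over C b e}"
    then obtain x where "x \<in> over_hom C b e" unfolding le_over_def by auto
    then show "b \<in> Comp C e ` over C (Dom C e)"
      unfolding over_hom_def over_def by force
  qed (use hom mem in \<open>auto simp: le_over_def\<close>)
  ultimately show ?thesis unfolding bij_betw_def by blast
qed

text \<open>Both sides are exponents of the size of the down-set of a: through \<phi> it is
  Pow (\<phi> a), through composition with a it is the overcategory of Dom a.\<close>

lemma card_over_iso_eq_codim:
  assumes "model C c" "p \<in> Obj C" "over_iso C c p \<phi>" "a \<in> over C p"
  shows "card (\<phi> a) = c (Dom C a)"
proof -
  let ?D = "{b \<in> over C p. le_over C b a}"
  have Dom_a: "Dom C a \<in> Obj C"
    using assms(4) model_Dom_in_Obj[OF assms(1)] unfolding over_def by blast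
  have fin: "finite (\<phi> a)"
    using over_iso_subset[OF assms(3,4)] finite_subset by blast
  have "bij_betw \<phi> ?D (Pow (\<phi> a))"
    unfolding bij_betw_def
  proof
    show "inj_on \<phi> ?D"
      using over_iso_inj[OF assms(3)] by (rule inj_on_subset) blast
    show "\<phi> ` ?D = Pow (\<phi> a)"
    proof (intro set_eqI iffI)
      fix S assume "S \<in> Pow (\<phi> a)"
      then obtain b where "b \<in> over C p" "\<phi> b = S"
        using over_iso_subset[OF assms(3,4)]
        by (metis PowD order_trans over_iso_obtain_preimage[OF assms(3)])
      then show "S \<in> \<phi> ` ?D"
        using \<open>S \<in> Pow (\<phi> a)\<close> over_iso_le_over_iff[OF assms(3) _ assms(4)] by auto
    qed (use over_iso_le_over_iff[OF assms(3) _ assms(4)] in auto)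
  qed
  then have "card ?D = 2 ^ card (\<phi> a)"
    using bij_betw_same_card card_Pow[OF fin] by metis
  moreover have "card ?D = 2 ^ c (Dom C a)"
    using bij_betw_same_card[OF bij_betw_Comp_over[OF assms(1,2,4)]] card_over[OF assms(1) Dom_a]
    by simp
  ultimately show ?thesis by simp
qed

lemma is_initial_iff_over_iso:
  assumes "model C c" "p \<in> Obj C" "over_iso C c p \<phi>"
  shows "is_initial C p a \<longleftrightarrow> a \<in> over C p \<and> \<phi> a = {}"
proof
  assume init: "is_initial C p a"
  obtain b where b: "b \<in> over C p" "\<phi> b = {}"
    using over_iso_obtain_preimage[OF assms(3)] by blast
  have "a \<in> over C p" "le_over C a b"
    using init b(1) unfolding is_initial_def le_over_def by blast+
  then show "a \<in> over C p \<and> \<phi> a = {}"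
    using over_iso_le_over_iff[OF assms(3)] b by blast
next
  assume a: "a \<in> over C p \<and> \<phi> a = {}"
  have "\<exists>!x. x \<in> over_hom C a b" if b: "b \<in> over C p" for b
  proof -
    obtain x where "x \<in> over_hom C a b"
      using over_iso_le_over_iff[OF assms(3) _ b, of a] a unfolding le_over_def by auto
    then show ?thesis
      using model_over_hom_unique[OF assms(1,2) _ b, of a] a by blast
  qed
  then show "is_initial C p a" unfolding is_initial_def using a by blast
qed

lemma is_initial_iff_codim:
  assumes "model C c" "p \<in> Obj C"
  shows "is_initial C p a \<longleftrightarrow> a \<in> over C p \<and> c (Dom C a) = 0"
proof -
  obtain \<phi> where iso: "over_iso C c p \<phi>" using model_obtain_over_iso[OF assms] .
  have "finite (\<phi> a)" if "a \<in> over C p"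
    using over_iso_subset[OF iso that] finite_subset by blast
  then show ?thesis
    using is_initial_iff_over_iso[OF assms iso] card_over_iso_eq_codim[OF assms iso]
    by (metis card_0_eq)
qed

lemma is_initial_init_arr:
  assumes "model C c" "p \<in> Obj C"
  shows "is_initial C p (init_arr C p)"
proof -
  obtain \<phi> where iso: "over_iso C c p \<phi>" using model_obtain_over_iso[OF assms] .
  obtain a where "a \<in> over C p" "\<phi> a = {}"
    using over_iso_obtain_preimage[OF iso] by blast
  then have "\<exists>!a. is_initial C p a"
    using is_initial_iff_over_iso[OF assms iso] over_iso_inj[OF iso]
    by (metis inj_on_contraD)
  then show ?thesis unfolding init_arr_def by (rule theI')
qed

lemma init_arr_eq:
  assumes "model C c" "p \<in> Obj C" "is_initial C p a"
  shows "init_arr C p = a"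
proof -
  obtain \<phi> where iso: "over_iso C c p \<phi>" using model_obtain_over_iso[OF assms(1,2)] .
  show ?thesis
    using is_initial_init_arr[OF assms(1,2)] assms(3) over_iso_inj[OF iso]
      is_initial_iff_over_iso[OF assms(1,2) iso] by (metis inj_on_contraD)
qed

lemma Q_iff_over_iso:
  assumes "model C c" "p \<in> Obj C" "over_iso C c p \<phi>"
  shows "a \<in> Q C p \<longleftrightarrow> a \<in> over C p \<and> card (\<phi> a) = 1"
proof (cases "a \<in> over C p")
  case a: True
  have sub: "\<phi> a \<subseteq> {1..c p}" using over_iso_subset[OF assms(3) a] .
  have minimal_iff: "(\<forall>b\<in>over C p. \<phi> b \<noteq> {} \<longrightarrow> \<phi> b \<subseteq> \<phi> a \<longrightarrow> b = a)
      \<longleftrightarrow> (\<forall>T \<subseteq> \<phi> a. T \<noteq> {} \<longrightarrow> T = \<phi> a)"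
  proof (intro iffI allI impI ballI)
    fix T assume min: "\<forall>b\<in>over C p. \<phi> b \<noteq> {} \<longrightarrow> \<phi> b \<subseteq> \<phi> a \<longrightarrow> b = a"
      and T: "T \<subseteq> \<phi> a" "T \<noteq> {}"
    have "T \<subseteq> {1..c p}" using T(1) sub by blast
    then obtain b where "b \<in> over C p" "\<phi> b = T"
      using over_iso_obtain_preimage[OF assms(3)] by metis
    then show "T = \<phi> a" using min T by blast
  next
    fix b assume "\<forall>T \<subseteq> \<phi> a. T \<noteq> {} \<longrightarrow> T = \<phi> a" "b \<in> over C p" "\<phi> b \<noteq> {}" "\<phi> b \<subseteq> \<phi> a"
    then show "b = a" using a over_iso_inj[OF assms(3)] by (metis inj_onD)
  qed
  have "card (\<phi> a) = 1 \<longleftrightarrow> \<phi> a \<noteq> {} \<and> (\<forall>T \<subseteq> \<phi> a. T \<noteq> {} \<longrightarrow> T = \<phi> a)"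
  proof
    assume "card (\<phi> a) = 1"
    then obtain t where "\<phi> a = {t}" by (rule card_1_singletonE)
    then show "\<phi> a \<noteq> {} \<and> (\<forall>T \<subseteq> \<phi> a. T \<noteq> {} \<longrightarrow> T = \<phi> a)" by auto
  next
    assume atom: "\<phi> a \<noteq> {} \<and> (\<forall>T \<subseteq> \<phi> a. T \<noteq> {} \<longrightarrow> T = \<phi> a)"
    then obtain t where "t \<in> \<phi> a" by blast
    then have "\<phi> a = {t}" using atom by blast
    then show "card (\<phi> a) = 1" by simp
  qed
  with minimal_iff show ?thesis
    using a is_initial_iff_over_iso[OF assms] over_iso_le_over_iff[OF assms(3) _ a]
    unfolding Q_def by auto
qed (auto simp: Q_def)

lemma Q_iff_codim:
  assumes "model C c" "p \<in> Obj C"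
  shows "a \<in> Q C p \<longleftrightarrow> a \<in> over C p \<and> c (Dom C a) = 1"
proof -
  obtain \<phi> where iso: "over_iso C c p \<phi>" using model_obtain_over_iso[OF assms] .
  show ?thesis using Q_iff_over_iso[OF assms iso] card_over_iso_eq_codim[OF assms iso] by auto
qed

lemma finite_Q:
  assumes "model C c" "p \<in> Obj C"
  shows "finite (Q C p)"
proof (rule finite_subset)
  show "Q C p \<subseteq> over C p" unfolding Q_def by blast
  show "finite (over C p)" by (rule card_ge_0_finite) (simp add: card_over[OF assms])
qed

lemma card_Q:
  assumes "model C c" "p \<in> Obj C"
  shows "card (Q C p) = c p"
proof -
  obtain \<phi> where iso: "over_iso C c p \<phi>" using model_obtain_over_iso[OF assms] .
  have "\<phi> ` Q C p = {S. S \<subseteq> {1..c p} \<and> card S = 1}"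
  proof (intro set_eqI iffI)
    fix S assume S: "S \<in> {S. S \<subseteq> {1..c p} \<and> card S = 1}"
    then obtain a where "a \<in> over C p" "\<phi> a = S"
      using over_iso_obtain_preimage[OF iso] by blast
    then show "S \<in> \<phi> ` Q C p" using S Q_iff_over_iso[OF assms iso] by blast
  qed (use Q_iff_over_iso[OF assms iso] over_iso_subset[OF iso] in auto)
  moreover have "inj_on \<phi> (Q C p)"
    using over_iso_inj[OF iso] by (rule inj_on_subset) (auto simp: Q_def)
  ultimately have "card (Q C p) = card {1..c p} choose 1"
    using card_image n_subsets[of "{1..c p}" 1] by fastforce
  then show ?thesis by simp
qed

lemma base_Dom_eq_base_Cod:
  assumes "model C c" "e \<in> Arr C"
  shows "base C (Dom C e) = base C (Cod C e)"
proof -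
  have obj: "Dom C e \<in> Obj C" "Cod C e \<in> Obj C"
    using model_category[OF assms(1)] assms(2) unfolding category_def by blast+
  let ?i = "init_arr C (Dom C e)"
  have i: "?i \<in> over C (Dom C e)" "c (Dom C ?i) = 0"
    using is_initial_init_arr[OF assms(1) obj(1)] is_initial_iff_codim[OF assms(1) obj(1)]
    by blast+
  have "Comp C e ?i \<in> over C (Cod C e)" "Dom C (Comp C e ?i) = Dom C ?i"
    using Comp_in_over[OF model_category[OF assms(1)], of e "Cod C e" ?i] assms(2) i(1)
    unfolding over_def by auto
  then have "init_arr C (Cod C e) = Comp C e ?i"
    using init_arr_eq[OF assms(1) obj(2)] is_initial_iff_codim[OF assms(1) obj(2)] i(2) by simp
  then show ?thesis
    unfolding base_def using \<open>Dom C (Comp C e ?i) = Dom C ?i\<close> by simp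
qed

lemma Q_between_iff_over_iso:
  assumes "model C c" "p \<in> Obj C" "over_iso C c p \<phi>"
    and "e \<in> over C p" "a \<in> over C p" "le_over C e a" "c (Dom C a) = Suc (c (Dom C e))"
  shows "w \<in> Q C p \<and> le_over C w a \<and> \<not> le_over C w e \<longleftrightarrow> w \<in> over C p \<and> \<phi> w = \<phi> a - \<phi> e"
proof -
  have sub: "\<phi> e \<subseteq> \<phi> a" using over_iso_le_over_iff[OF assms(3,4,5)] assms(6) by blast
  have "finite (\<phi> a)" using over_iso_subset[OF assms(3,5)] finite_subset by blast
  moreover have "card (\<phi> a) = Suc (card (\<phi> e))"
    using card_over_iso_eq_codim[OF assms(1-3)] assms(4,5,7) by simp
  ultimately have "card (\<phi> a - \<phi> e) = 1"
    using sub by (simp add: card_Diff_subset finite_subset)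
  then obtain t where t: "\<phi> a - \<phi> e = {t}" by (rule card_1_singletonE)
  show ?thesis
    using Q_iff_over_iso[OF assms(1-3)] over_iso_le_over_iff[OF assms(3) _ assms(4)]
      over_iso_le_over_iff[OF assms(3) _ assms(5)] t sub
    by (auto simp: card_1_singleton_iff) (metis DiffI singletonD)
qed

lemma ex1_Q_between:
  assumes "model C c" "p \<in> Obj C"
    and "e \<in> over C p" "a \<in> over C p" "le_over C e a" "c (Dom C a) = Suc (c (Dom C e))"
  shows "\<exists>!w. w \<in> Q C p \<and> le_over C w a \<and> \<not> le_over C w e"
proof -
  obtain \<phi> where iso: "over_iso C c p \<phi>" using model_obtain_over_iso[OF assms(1,2)] .
  have "\<phi> a - \<phi> e \<subseteq> {1..c p}" using over_iso_subset[OF iso assms(4)] by blast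
  then obtain w where "w \<in> over C p" "\<phi> w = \<phi> a - \<phi> e"
    using over_iso_obtain_preimage[OF iso] by metis
  then show ?thesis
    unfolding Q_between_iff_over_iso[OF assms(1,2) iso assms(3-6)]
    using over_iso_inj[OF iso] by (metis inj_onD)
qed

definition atom_between :: "('o, 'a) cat \<Rightarrow> 'o \<Rightarrow> 'a \<Rightarrow> 'a \<Rightarrow> 'a" where
  "atom_between C p e a = (THE w. w \<in> Q C p \<and> le_over C w a \<and> \<not> le_over C w e)"

lemma atom_between:
  assumes "model C c" "p \<in> Obj C"
    and "e \<in> over C p" "a \<in> over C p" "le_over C e a" "c (Dom C a) = Suc (c (Dom C e))"
  shows "atom_between C p e a \<in> Q C p" "le_over C (atom_between C p e a) a"
    and "\<not> le_over C (atom_between C p e a) e"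
  using theI'[OF ex1_Q_between[OF assms]] unfolding atom_between_def by blast+

lemma atom_between_inject:
  assumes "model C c" "p \<in> Obj C" "e \<in> over C p"
    and a: "a \<in> over C p" "le_over C e a" "c (Dom C a) = Suc (c (Dom C e))"
    and a': "a' \<in> over C p" "le_over C e a'" "c (Dom C a') = Suc (c (Dom C e))"
    and "atom_between C p e a = atom_between C p e a'"
  shows "a = a'"
proof -
  obtain \<phi> where iso: "over_iso C c p \<phi>" using model_obtain_over_iso[OF assms(1,2)] .
  have "\<phi> a - \<phi> e = \<phi> a' - \<phi> e"
    using Q_between_iff_over_iso[OF assms(1,2) iso assms(3) a]
      Q_between_iff_over_iso[OF assms(1,2) iso assms(3) a']
      atom_between[OF assms(1-3) a] atom_between[OF assms(1-3) a'] assms(10) by metis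
  moreover have "\<phi> e \<subseteq> \<phi> a" "\<phi> e \<subseteq> \<phi> a'"
    using over_iso_le_over_iff[OF iso assms(3)] a a' by blast+
  ultimately have "\<phi> a = \<phi> a'" by blast
  then show ?thesis using over_iso_inj[OF iso] a(1) a'(1) by (metis inj_onD)
qed

lemma Comp_in_Q:
  assumes "model C c" "p \<in> Obj C" "e \<in> over C p" "b \<in> Q C (Dom C e)"
  shows "Comp C e b \<in> Q C p" "le_over C (Comp C e b) e"
proof -
  have Dom_e: "Dom C e \<in> Obj C"
    using assms(3) model_Dom_in_Obj[OF assms(1)] unfolding over_def by blast
  have b: "b \<in> over C (Dom C e)" "c (Dom C b) = 1"
    using assms(4) Q_iff_codim[OF assms(1) Dom_e] by blast+
  show "le_over C (Comp C e b) e"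
    using bij_betw_apply[OF bij_betw_Comp_over[OF assms(1-3)] b(1)] by blast
  have "Comp C e b \<in> over C p" "Dom C (Comp C e b) = Dom C b"
    using Comp_in_over[OF model_category[OF assms(1)] assms(3)] b(1) unfolding over_def by auto
  then show "Comp C e b \<in> Q C p" using Q_iff_codim[OF assms(1,2)] b(2) by simp
qed

lemma is_functor_le_over:
  assumes "is_functor C D F A" "a \<in> Arr C" "b \<in> Arr C" "le_over C a b"
  shows "le_over D (A a) (A b)"
proof -
  obtain x where x: "x \<in> Arr C" "Dom C x = Dom C a" "Cod C x = Dom C b" "Comp C b x = a"
    using assms(4) unfolding le_over_def over_hom_def by blast
  have "A x \<in> Arr D" "Dom D (A x) = Dom D (A a)" "Cod D (A x) = Dom D (A b)"
      "Comp D (A b) (A x) = A a"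
    using assms(1-3) x unfolding is_functor_def by auto
  then have "A x \<in> over_hom D (A a) (A b)" unfolding over_hom_def by simp
  then show ?thesis unfolding le_over_def by blast
qed

lemma model_morphism_codim_shift:
  assumes "model_morphism C c D d F A" "p \<in> Obj C" "q \<in> Obj C"
  shows "d (F q) + c p = d (F p) + c q"
proof -
  obtain k :: int where "\<forall>p\<in>Obj C. int (d (F p)) = int (c p) + k"
    using assms(1) unfolding model_morphism_def by blast
  then have "int (d (F q)) + int (c p) = int (d (F p)) + int (c q)"
    using assms(2,3) by simp
  then show ?thesis by linarith
qed

lemma model_morphism_Q_above_init_arr:
  assumes "model_morphism C c D d F A" "x \<in> Obj C" "a \<in> Q C x"
  shows "A a \<in> over D (F x)" "le_over D (A (init_arr C x)) (A a)"
    and "d (Dom D (A a)) = Suc (d (Dom D (A (init_arr C x))))"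
proof -
  have mC: "model C c" and AF: "is_functor C D F A"
    using assms(1) unfolding model_morphism_def by blast+
  let ?j = "init_arr C x"
  have j: "?j \<in> over C x" "c (Dom C ?j) = 0" "le_over C ?j a"
    using is_initial_init_arr[OF mC assms(2)] is_initial_iff_codim[OF mC assms(2)] assms(3)
    unfolding is_initial_def le_over_def Q_def by blast+
  have a: "a \<in> over C x" "c (Dom C a) = 1" using Q_iff_codim[OF mC assms(2)] assms(3) by blast+
  show "A a \<in> over D (F x)"
    using AF a(1) unfolding is_functor_def over_def by auto
  show "le_over D (A ?j) (A a)"
    using is_functor_le_over[OF AF _ _ j(3)] a(1) j(1) unfolding over_def by blast
  have "d (F (Dom C a)) + c (Dom C ?j) = d (F (Dom C ?j)) + c (Dom C a)"
    using model_morphism_codim_shift[OF assms(1)] model_Dom_in_Obj[OF mC] a(1) j(1)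
    unfolding over_def by blast
  then show "d (Dom D (A a)) = Suc (d (Dom D (A ?j)))"
    using AF a j unfolding is_functor_def over_def by auto
qed

lemma bij_betw_case_sum:
  assumes "inj_on f A" "inj_on g B" "f ` A \<inter> g ` B = {}" "f ` A \<union> g ` B \<subseteq> C"
    and "card A + card B = card C" "finite C"
  shows "bij_betw (case_sum f g) (A <+> B) C"
proof -
  have inj: "inj_on (case_sum f g) (A <+> B)"
  proof (rule inj_onI)
    fix s t assume "s \<in> A <+> B" "t \<in> A <+> B" "case_sum f g s = case_sum f g t"
    then show "s = t" using assms(1-3) by (elim PlusE) (auto dest: inj_onD)
  qed
  have into: "case_sum f g ` (A <+> B) \<subseteq> C" using assms(4) by auto
  have "finite A" "finite B"
    using assms(1,2,4,6) by (meson finite_imageD finite_subset le_sup_iff)+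
  then have "card (case_sum f g ` (A <+> B)) = card C"
    using card_image[OF inj] assms(5) by (simp add: card_Plus)
  then show ?thesis
    unfolding bij_betw_def using inj card_subset_eq[OF assms(6) into] by blast
qed

lemma model_morphism_Q_decomposition:
  assumes g: "model_morphism C c D d F A" and x: "x \<in> Obj C"
  shows "\<exists>h. bij_betw h (Q C x <+> Q D (F (base C x))) (Q D (F x))
    \<and> (\<forall>b\<in>Q D (F (base C x)). h (Inr b) = Comp D (A (init_arr C x)) b)
    \<and> (\<forall>a\<in>Q C x. le_over D (h (Inl a)) (A a) \<and> \<not> le_over D (h (Inl a)) (A (init_arr C x)))"
proof -
  have mC: "model C c" and mD: "model D d" and AF: "is_functor C D F A"
    and injA: "inj_on A (Arr C)"
    using g unfolding model_morphism_def by blast+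
  define j where "j = init_arr C x"
  define r where "r = base C x"
  have j: "j \<in> over C x" "Dom C j = r" "c r = 0"
    using is_initial_init_arr[OF mC x] is_initial_iff_codim[OF mC x]
    unfolding j_def r_def base_def by blast+
  have r: "r \<in> Obj C" using j model_Dom_in_Obj[OF mC] unfolding over_def by blast
  have Fx: "F x \<in> Obj D" and Fr: "F r \<in> Obj D"
    using AF x r unfolding is_functor_def by blast+
  have Aj: "A j \<in> over D (F x)" "Dom D (A j) = F r"
    using AF j unfolding is_functor_def over_def by auto
  define u where "u a = atom_between D (F x) (A j) (A a)" for a
  note above_j = model_morphism_Q_above_init_arr[OF g x, folded j_def]
  note u = atom_between[OF mD Fx Aj(1) above_j, folded u_def]
  have "inj_on u (Q C x)"
  proof (rule inj_onI)
    fix a a' assume a: "a \<in> Q C x" and a': "a' \<in> Q C x" and "u a = u a'"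
    then have "A a = A a'"
      using atom_between_inject[OF mD Fx Aj(1) above_j[OF a] above_j[OF a']] u_def by metis
    then show "a = a'"
      using injA a a' unfolding Q_def over_def by (auto dest: inj_onD)
  qed
  moreover have "inj_on (Comp D (A j)) (Q D (F r))"
    using bij_betw_imp_inj_on[OF bij_betw_Comp_over[OF mD Fx Aj(1)]] unfolding Aj(2)
    by (rule inj_on_subset) (auto simp: Q_def)
  moreover have "u ` Q C x \<inter> Comp D (A j) ` Q D (F r) = {}"
    using u(3) Comp_in_Q(2)[OF mD Fx Aj(1)] unfolding Aj(2) by fastforce
  moreover have "u ` Q C x \<union> Comp D (A j) ` Q D (F r) \<subseteq> Q D (F x)"
    using u(1) Comp_in_Q(1)[OF mD Fx Aj(1)] unfolding Aj(2) by blast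
  moreover have "card (Q C x) + card (Q D (F r)) = card (Q D (F x))"
    using model_morphism_codim_shift[OF g r x] j(3) card_Q[OF mC x] card_Q[OF mD Fx]
      card_Q[OF mD Fr] by simp
  ultimately have "bij_betw (case_sum u (Comp D (A j))) (Q C x <+> Q D (F r)) (Q D (F x))"
    using finite_Q[OF mD Fx] by (rule bij_betw_case_sum)
  then show ?thesis
    using u(2,3) unfolding j_def r_def by auto
qed

lemma model_morphism_base_eq:
  assumes "model_morphism C c D d F A" "p \<in> Obj C"
  shows "base D (F (base C p)) = base D (F p)" "F (base C p) \<in> Obj D"
proof -
  have mC: "model C c" and mD: "model D d" and AF: "is_functor C D F A"
    using assms(1) unfolding model_morphism_def by blast+
  let ?i = "init_arr C p"
  have i: "?i \<in> Arr C" "Cod C ?i = p"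
    using is_initial_init_arr[OF mC assms(2)] unfolding is_initial_def over_def by blast+
  have "A ?i \<in> Arr D" "Dom D (A ?i) = F (base C p)" "Cod D (A ?i) = F p"
    using AF i unfolding is_functor_def base_def by auto
  then show "base D (F (base C p)) = base D (F p)" "F (base C p) \<in> Obj D"
    using base_Dom_eq_base_Cod[OF mD] model_Dom_in_Obj[OF mD] by metis+
qed

theorem mainTheorem2:
  fixes P0 :: "('o0, 'a0) cat" and P1 :: "('o1, 'a1) cat" and P2 :: "('o2, 'a2) cat"
    and c0 :: "'o0 \<Rightarrow> nat" and c1 :: "'o1 \<Rightarrow> nat" and c2 :: "'o2 \<Rightarrow> nat"
    and F :: "'o0 \<Rightarrow> 'o1" and A :: "'a0 \<Rightarrow> 'a1"
    and G :: "'o1 \<Rightarrow> 'o2" and B :: "'a1 \<Rightarrow> 'a2"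
    and p :: 'o0
  assumes f: "model_morphism P0 c0 P1 c1 F A"
    and g: "model_morphism P1 c1 P2 c2 G B"
    and p: "p \<in> Obj P0"
  shows "\<exists>h. bij_betw h (Q_mor P0 P1 F p <+> Q_mor P1 P2 G (F p)) (Q_mor P0 P2 (G \<circ> F) p)
           \<and> (\<forall>b\<in>Q_mor P1 P2 G (F p).
                 h (Inr b) = Comp P2 (B (init_arr P1 (F (base P0 p)))) b)
           \<and> (\<forall>a\<in>Q_mor P0 P1 F p.
                 le_over P2 (h (Inl a)) (B a) \<and>
                 \<not> le_over P2 (h (Inl a)) (B (init_arr P1 (F (base P0 p)))))"
  using model_morphism_Q_decomposition[OF g model_morphism_base_eq(2)[OF f p]]
  unfolding Q_mor_def model_morphism_base_eq(1)[OF f p] by simp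

end
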